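(* Let $T\in\mathcal{C}_{P,t}$ and let $I_T=\{S\in\mathbb{C}[z]: T(S(z)b)=0\text{ for all }b\in\mathcal{A}_P\}$. Then $I_T=\{S\in\mathbb{C}[z] : S(x)F_T(x)\in\mathbb{C}[x]\}$, where the product $S(x)F_T(x)$ is computed in the ring of formal Laurent series $\mathbb{C}((x^{-1}))$. In particular, $T$ is degenerate if and only if $F_T(x)$ is (the expansion at $x=\infty$ of) a rational function of $x$; and in that case, writing $F_T=R/S$ with $R,S\in\mathbb{C}[x]$, $S$ monic and $\gcd(R,S)=1$, the polynomial $S(z)$ generates the ideal $I_T$ of $\mathbb{C}[z]$.
   Context: $P\in\mathbb{C}[x]$ is a nonconstant monic polynomial, $t\in\mathbb{C}\setminus\{0\}$. $\mathcal{A}_P$ denotes the associative unital $\mathbb{C}$-algebra generated by $u,v,z$ subject to $zu-uz=u$, $zv-vz=-v$, $uv=P(z-\tfrac12)$, $vu=P(z+\tfrac12)$; the subalgebra generated by $z$ is a polynomial ring $\mathbb{C}[z]$. $g_t$ is the automorphism with $g_t(u)=t^{-1}u$, $g_t(v)=tv$, $g_t(z)=z$. A twisted trace is a linear $T:\mathcal{A}_P\to\mathbb{C}$ with $T(ab)=T(g_t(b)a)$ for all $a,b$; $\mathcal{C}_{P,t}$ is the space of these. $T$ is degenerate if there is $0\neq a\in\mathcal{A}_P$ with $T(ab)=0$ for all $b$. The formal Stieltjes transform of $T$ is $F_T(x)=\sum_{n\ge0}T(z^n)x^{-n-1}\in x^{-1}\mathbb{C}[[x^{-1}]]$; rational functions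 vanishing at $\infty$ are identified with their expansions in $x^{-1}\mathbb{C}[[x^{-1}]]$. *)

theory Defs
  imports Complex_Main "HOL-Computational_Algebra.Polynomial" "HOL-Computational_Algebra.Formal_Laurent_Series"
begin

text \<open>We model the free
  algebra on the generators: an element is a finite formal linear combination of words,
  represented as a list of (coefficient, word) pairs (the represented element is the sum).
  A_P is the quotient of this free algebra by the two-sided ideal J generated by the
  four defining relations. A linear map on A_P is the same as a linear map on the free
  algebra vanishing on J, and a linear map on the free algebra is the same as its family
  of values on words; so a linear functional on A_P is encoded by a function on words
  whose linear extension kills J.\<close>

datatype gen = U | V | Z

type_synonym word = "gen list"
type_synonym fa = "(complex \<times> word) list"

definition fa_mult :: "fa \<Rightarrow> fa \<Rightarrow> fa" where
  "fa_mult A B = concat (map (\<lambda>(c, w). map (\<lambda>(d, w'). (c * d, w @ w')) B) A)"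

definition fa_smult :: "complex \<Rightarrow> fa \<Rightarrow> fa" where
  "fa_smult c A = map (\<lambda>(d, w). (c * d, w)) A"

definition fa_word :: "word \<Rightarrow> fa" where
  "fa_word w = [(1, w)]"

definition fa_coeff :: "fa \<Rightarrow> word \<Rightarrow> complex" where
  "fa_coeff A w = sum_list (map (\<lambda>(c, w'). if w' = w then c else 0) A)"

definition fa_poly :: "complex poly \<Rightarrow> fa" where
  "fa_poly S = map (\<lambda>i. (coeff S i, replicate i Z)) [0..<Suc (degree S)]"

definition fa_ev :: "(word \<Rightarrow> complex) \<Rightarrow> fa \<Rightarrow> complex" where
  "fa_ev T A = sum_list (map (\<lambda>(c, w). c * T w) A)"

definition rels :: "complex poly \<Rightarrow> fa list" where
  "rels P =
    [ [(1, [Z, U]), (-1, [U, Z]), (-1, [U])],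
      [(1, [Z, V]), (-1, [V, Z]), (1, [V])],
      [(1, [U, V])] @ fa_smult (-1) (fa_poly (pcompose P [:-1/2, 1:])),
      [(1, [V, U])] @ fa_smult (-1) (fa_poly (pcompose P [:1/2, 1:])) ]"

text \<open>membership in the two-sided ideal J generated by the relations
  (equality of elements of the free algebra is equality of all word coefficients)\<close>
definition in_J :: "complex poly \<Rightarrow> fa \<Rightarrow> bool" where
  "in_J P a \<longleftrightarrow> (\<exists>L :: (complex \<times> word \<times> nat \<times> word) list.
      (\<forall>(c, x, i, y) \<in> set L. i < length (rels P)) \<and>
      (\<forall>w. fa_coeff a w =
         fa_coeff (concat (map (\<lambda>(c, x, i, y).
              fa_smult c (fa_mult (fa_mult (fa_word x) (rels P ! i)) (fa_word y))) L)) w))"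

text \<open>the automorphism g_t on a word: u \<mapsto> t^-1 u, v \<mapsto> t v, z \<mapsto> z\<close>
definition g_factor :: "complex \<Rightarrow> word \<Rightarrow> complex" where
  "g_factor t w = t powi (int (count_list w V) - int (count_list w U))"

definition is_functional :: "complex poly \<Rightarrow> (word \<Rightarrow> complex) \<Rightarrow> bool" where
  "is_functional P T \<longleftrightarrow>
     (\<forall>x y. \<forall>r \<in> set (rels P). fa_ev T (fa_mult (fa_mult (fa_word x) r) (fa_word y)) = 0)"

text \<open>twisted traces: T(ab) = T(g_t(b) a); by bilinearity it suffices to check words\<close>
definition twisted_trace :: "complex poly \<Rightarrow> complex \<Rightarrow> (word \<Rightarrow> complex) \<Rightarrow> bool" where
  "twisted_trace P t T \<longleftrightarrow> is_functional P T \<and>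
     (\<forall>a b. fa_ev T (fa_mult (fa_word a) (fa_word b))
            = fa_ev T (fa_mult (fa_smult (g_factor t b) (fa_word b)) (fa_word a)))"

definition degenerate :: "complex poly \<Rightarrow> (word \<Rightarrow> complex) \<Rightarrow> bool" where
  "degenerate P T \<longleftrightarrow> (\<exists>a. \<not> in_J P a \<and> (\<forall>b. fa_ev T (fa_mult a b) = 0))"

definition I_T :: "(word \<Rightarrow> complex) \<Rightarrow> complex poly set" where
  "I_T T = {S. \<forall>b. fa_ev T (fa_mult (fa_poly S) b) = 0}"

text \<open>The ring C((x^-1)) is modelled as Laurent series in y = x^-1 (fls_X = x^-1);
  a polynomial R(x) embeds as R(fls_X_inv).\<close>
definition xpoly :: "complex poly \<Rightarrow> complex fls" where
  "xpoly R = poly (map_poly fls_const R) fls_X_inv"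

text \<open>formal Stieltjes transform F_T(x) = sum_n T(z^n) x^(-n-1)\<close>
definition stieltjes :: "(word \<Rightarrow> complex) \<Rightarrow> complex fls" where
  "stieltjes T = fls_X * fps_to_fls (Abs_fps (\<lambda>n. T (replicate n Z)))"

end

theory Submission
  imports Defs "HOL-Computational_Algebra.Polynomial_Factorial" "HOL-Computational_Algebra.Field_as_Ring"
begin

text \<open>Modulo the defining ideal J every word can be rewritten as a combination of normal words
  \<open>z\<^sup>i u\<^sup>k\<close> and \<open>z\<^sup>i v\<^sup>k\<close> of the same weight \<open>#u - #v\<close>. For a twisted trace,
  \<open>T(zw) = T(wz)\<close> together with \<open>[z, w] = weight(w) w\<close> forces T to vanish on words of nonzero
  weight; hence \<open>T(S(z) b) = 0\<close> for all b reduces to the vanishing of the moments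
  \<open>T(S(z) z\<^sup>j)\<close>, which are exactly the coefficients of the positive powers of x in
  \<open>S(x) F\<^sub>T(x)\<close>. If \<open>T(a b) = 0\<close> for all b with \<open>a \<notin> J\<close>, write the weight-k part of a as
  \<open>q(z) u\<^sup>k\<close> (or \<open>q(z) v\<^sup>k\<close>) and multiply by \<open>v\<^sup>k\<close> (resp. \<open>u\<^sup>k\<close>): since \<open>u\<^sup>k v\<^sup>k \<equiv> \<Phi>(z)\<close>
  with \<open>\<Phi>\<close> a nonzero product of shifts of P, \<open>q \<Phi>\<close> lies in \<open>I\<^sub>T\<close>, so \<open>I\<^sub>T \<noteq> 0\<close>.
  That polynomials in z and \<open>u\<^sup>k v\<^sup>k\<close> do not vanish modulo J is seen in the representation of
  the algebra on functions \<open>\<int> \<rightarrow> \<complex>\<close> in which z acts by multiplication with \<open>\<lambda> + n\<close>.\<close>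

abbreviation zs :: "nat \<Rightarrow> word" where "zs n \<equiv> replicate n Z"

section \<open>The free algebra and the ideal of relations\<close>

definition fa_wrap :: "word \<Rightarrow> word \<Rightarrow> fa \<Rightarrow> fa" where
  "fa_wrap x y A = map (\<lambda>(c, w). (c, x @ w @ y)) A"

definition rel_combination :: "complex poly \<Rightarrow> (complex \<times> word \<times> nat \<times> word) list \<Rightarrow> fa" where
  "rel_combination P L = concat (map (\<lambda>(c, x, i, y).
     fa_smult c (fa_mult (fa_mult (fa_word x) (rels P ! i)) (fa_word y))) L)"

definition J_equiv :: "complex poly \<Rightarrow> fa \<Rightarrow> fa \<Rightarrow> bool" where
  "J_equiv P A B \<longleftrightarrow> in_J P (A @ fa_smult (-1) B)"

lemma fa_coeff_Nil [simp]: "fa_coeff [] w = 0"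
  by (simp add: fa_coeff_def)

lemma fa_coeff_Cons [simp]: "fa_coeff ((c, v) # A) w = (if v = w then c else 0) + fa_coeff A w"
  by (simp add: fa_coeff_def)

lemma fa_coeff_append [simp]: "fa_coeff (A @ B) w = fa_coeff A w + fa_coeff B w"
  by (simp add: fa_coeff_def)

lemma fa_coeff_smult [simp]: "fa_coeff (fa_smult c A) w = c * fa_coeff A w"
  by (induct A) (auto simp: fa_smult_def algebra_simps)

lemma fa_coeff_notin: "w \<notin> snd ` set A \<Longrightarrow> fa_coeff A w = 0"
  by (induct A) (auto simp: fa_coeff_def)

lemma fa_smult_Nil [simp]: "fa_smult c [] = []"
  by (simp add: fa_smult_def)

lemma fa_smult_Cons [simp]: "fa_smult c ((d, v) # A) = (c * d, v) # fa_smult c A"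
  by (simp add: fa_smult_def)

lemma fa_smult_append [simp]: "fa_smult c (A @ B) = fa_smult c A @ fa_smult c B"
  by (simp add: fa_smult_def)

lemma fa_wrap_Nil [simp]: "fa_wrap x y [] = []"
  by (simp add: fa_wrap_def)

lemma fa_wrap_Cons [simp]: "fa_wrap x y ((c, v) # A) = (c, x @ v @ y) # fa_wrap x y A"
  by (simp add: fa_wrap_def)

lemma fa_wrap_append [simp]: "fa_wrap x y (A @ B) = fa_wrap x y A @ fa_wrap x y B"
  by (simp add: fa_wrap_def)

lemma fa_wrap_smult [simp]: "fa_wrap x y (fa_smult c A) = fa_smult c (fa_wrap x y A)"
  by (induct A) auto

lemma fa_wrap_wrap [simp]: "fa_wrap x y (fa_wrap x' y' A) = fa_wrap (x @ x') (y' @ y) A"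
  by (induct A) auto

lemma fa_wrap_Nil_Nil [simp]: "fa_wrap [] [] A = A"
  by (induct A) auto

lemma fa_wrap_word [simp]: "fa_wrap x y (fa_word w) = fa_word (x @ w @ y)"
  by (simp add: fa_word_def)

lemma fa_mult_words: "fa_mult (fa_mult (fa_word x) A) (fa_word y) = fa_wrap x y A"
  by (induct A) (auto simp: fa_mult_def fa_word_def)

lemma fa_mult_word_right: "fa_mult A (fa_word y) = fa_wrap [] y A"
  by (induct A) (auto simp: fa_mult_def fa_word_def)

lemma fa_coeff_wrap:
  "fa_coeff (fa_wrap x y A) w =
    (if \<exists>v. w = x @ v @ y then fa_coeff A (drop (length x) (take (length w - length y) w)) else 0)"
proof (induct A)
  case (Cons a A)
  obtain c v where a: "a = (c, v)" by force
  have "x @ v @ y = w \<longleftrightarrow> (\<exists>v. w = x @ v @ y) \<and> v = drop (length x) (take (length w - length y) w)"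
    by auto
  then show ?case using Cons by (auto simp: a)
qed simp

lemma fa_coeff_wrap_cong:
  "(\<And>w. fa_coeff A w = fa_coeff B w) \<Longrightarrow> fa_coeff (fa_wrap x y A) w = fa_coeff (fa_wrap x y B) w"
  by (simp add: fa_coeff_wrap)

lemma rel_combination_append [simp]:
  "rel_combination P (L1 @ L2) = rel_combination P L1 @ rel_combination P L2"
  by (simp add: rel_combination_def)

lemma rel_combination_smult:
  "rel_combination P (map (\<lambda>(d, r). (c * d, r)) L) = fa_smult c (rel_combination P L)"
  by (induct L) (auto simp: rel_combination_def fa_smult_def)

lemma rel_combination_wrap:
  "rel_combination P (map (\<lambda>(c, x, i, y). (c, x' @ x, i, y @ y')) L)
   = fa_wrap x' y' (rel_combination P L)"
  by (induct L) (auto simp: rel_combination_def fa_mult_words)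

lemma in_J_iff:
  "in_J P A \<longleftrightarrow> (\<exists>L. (\<forall>(c, x, i, y) \<in> set L. i < length (rels P)) \<and>
      (\<forall>w. fa_coeff A w = fa_coeff (rel_combination P L) w))"
  by (simp add: in_J_def rel_combination_def)

lemma in_J_cong: "in_J P A \<Longrightarrow> (\<And>w. fa_coeff A w = fa_coeff B w) \<Longrightarrow> in_J P B"
  unfolding in_J_iff by metis

lemma in_J_Nil: "in_J P []"
  unfolding in_J_iff by (rule exI[of _ "[]"]) (simp add: rel_combination_def)

lemma in_J_append: "in_J P A \<Longrightarrow> in_J P B \<Longrightarrow> in_J P (A @ B)"
  unfolding in_J_iff by (metis (no_types, lifting) Un_iff fa_coeff_append rel_combination_append set_append)

lemma in_J_smult: "in_J P A \<Longrightarrow> in_J P (fa_smult c A)"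
  unfolding in_J_iff
proof (elim exE conjE)
  fix L assume "\<forall>(c, x, i, y) \<in> set L. i < length (rels P)"
    and "\<forall>w. fa_coeff A w = fa_coeff (rel_combination P L) w"
  then show "\<exists>L. (\<forall>(c, x, i, y) \<in> set L. i < length (rels P)) \<and>
      (\<forall>w. fa_coeff (fa_smult c A) w = fa_coeff (rel_combination P L) w)"
    by (intro exI[of _ "map (\<lambda>(d, r). (c * d, r)) L"]) (auto simp: rel_combination_smult)
qed

lemma in_J_wrap: "in_J P A \<Longrightarrow> in_J P (fa_wrap x y A)"
  unfolding in_J_iff
proof (elim exE conjE)
  fix L assume "\<forall>(c, x, i, y) \<in> set L. i < length (rels P)"
    and "\<forall>w. fa_coeff A w = fa_coeff (rel_combination P L) w"
  then show "\<exists>L. (\<forall>(c, x, i, y) \<in> set L. i < length (rels P)) \<and>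
      (\<forall>w. fa_coeff (fa_wrap x y A) w = fa_coeff (rel_combination P L) w)"
    by (intro exI[of _ "map (\<lambda>(c, x0, i, y0). (c, x @ x0, i, y0 @ y)) L"])
      (auto simp: rel_combination_wrap intro!: fa_coeff_wrap_cong)
qed

lemma in_J_rels: "i < length (rels P) \<Longrightarrow> in_J P (rels P ! i)"
  unfolding in_J_iff
  by (rule exI[of _ "[(1, [], i, [])]"]) (auto simp: rel_combination_def fa_mult_words)

lemma fa_ev_Nil [simp]: "fa_ev T [] = 0"
  by (simp add: fa_ev_def)

lemma fa_ev_Cons [simp]: "fa_ev T ((c, v) # A) = c * T v + fa_ev T A"
  by (simp add: fa_ev_def)

lemma fa_ev_append [simp]: "fa_ev T (A @ B) = fa_ev T A + fa_ev T B"
  by (simp add: fa_ev_def)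

lemma fa_ev_smult [simp]: "fa_ev T (fa_smult c A) = c * fa_ev T A"
  by (induct A) (auto simp: algebra_simps)

lemma fa_ev_word [simp]: "fa_ev T (fa_word w) = T w"
  by (simp add: fa_word_def)

lemma fa_ev_wrap: "fa_ev T (fa_wrap x y A) = fa_ev (\<lambda>w. T (x @ w @ y)) A"
  by (induct A) auto

lemma fa_ev_eq_sum_coeff:
  assumes "finite W" "snd ` set A \<subseteq> W"
  shows "fa_ev T A = (\<Sum>w\<in>W. fa_coeff A w * T w)"
  using assms(2)
proof (induct A)
  case (Cons a A)
  obtain c v where a: "a = (c, v)" by force
  have "(\<Sum>w\<in>W. fa_coeff (a # A) w * T w)
        = (\<Sum>w\<in>W. if v = w then c * T v else 0) + (\<Sum>w\<in>W. fa_coeff A w * T w)"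
    by (simp add: a distrib_right sum.distrib) (rule sum.cong, auto)
  also have "(\<Sum>w\<in>W. if v = w then c * T v else 0) = c * T v"
    using Cons.prems a assms(1) by (simp add: sum.delta)
  finally show ?case using Cons a by auto
qed simp

lemma fa_ev_cong:
  assumes "\<And>w. fa_coeff A w = fa_coeff B w"
  shows "fa_ev T A = fa_ev T B"
proof -
  let ?W = "snd ` set A \<union> snd ` set B"
  have "fa_ev T A = (\<Sum>w\<in>?W. fa_coeff A w * T w)" by (rule fa_ev_eq_sum_coeff) auto
  also have "\<dots> = (\<Sum>w\<in>?W. fa_coeff B w * T w)" using assms by simp
  also have "\<dots> = fa_ev T B" by (rule fa_ev_eq_sum_coeff[symmetric]) auto
  finally show ?thesis .
qed

lemma fa_ev_mult: "fa_ev T (fa_mult A B) = (\<Sum>(d, w)\<leftarrow>B. d * fa_ev T (fa_wrap [] w A))"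
proof (induct A)
  case (Cons a A)
  obtain c v where a: "a = (c, v)" by force
  have "fa_ev T (fa_mult (a # A) B) = (\<Sum>x\<leftarrow>B. c * fst x * T (v @ snd x)) + fa_ev T (fa_mult A B)"
    by (simp add: fa_mult_def a fa_ev_def o_def case_prod_beta)
  also have "\<dots> = (\<Sum>(d, w)\<leftarrow>B. d * fa_ev T (fa_wrap [] w (a # A)))"
    unfolding Cons a by (simp add: sum_list_addf[symmetric] algebra_simps split_def)
  finally show ?case .
qed (simp add: fa_mult_def)

lemma functional_vanishes_on_J:
  assumes F: "is_functional P T" and J: "in_J P A"
  shows "fa_ev T A = 0"
proof -
  obtain L where L: "\<forall>(c, x, i, y) \<in> set L. i < length (rels P)"
    and C: "\<forall>w. fa_coeff A w = fa_coeff (rel_combination P L) w"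
    using J unfolding in_J_iff by blast
  from L have "fa_ev T (rel_combination P L) = 0"
  proof (induct L)
    case (Cons l L)
    obtain c x i y where l: "l = (c, x, i, y)" by (cases l) auto
    have "fa_ev T (fa_mult (fa_mult (fa_word x) (rels P ! i)) (fa_word y)) = 0"
      using F Cons.prems l unfolding is_functional_def by auto
    then show ?case using Cons l by (auto simp: rel_combination_def)
  qed (simp add: rel_combination_def)
  with C show ?thesis using fa_ev_cong[of A "rel_combination P L" T] by simp
qed

lemma J_equiv_coeff: "(\<And>w. fa_coeff A w = fa_coeff B w) \<Longrightarrow> J_equiv P A B"
  unfolding J_equiv_def by (rule in_J_cong[OF in_J_Nil]) simp

lemma J_equiv_refl: "J_equiv P A A"
  by (rule J_equiv_coeff) simp

lemma J_equiv_trans: "J_equiv P A B \<Longrightarrow> J_equiv P B C \<Longrightarrow> J_equiv P A C"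
  unfolding J_equiv_def by (drule (1) in_J_append) (erule in_J_cong, simp)

lemma J_equiv_append: "J_equiv P A B \<Longrightarrow> J_equiv P A' B' \<Longrightarrow> J_equiv P (A @ A') (B @ B')"
  unfolding J_equiv_def by (drule (1) in_J_append) (erule in_J_cong, simp)

lemma J_equiv_smult: "J_equiv P A B \<Longrightarrow> J_equiv P (fa_smult c A) (fa_smult c B)"
  unfolding J_equiv_def by (drule in_J_smult[where c = c]) (erule in_J_cong, simp add: algebra_simps)

lemma J_equiv_wrap: "J_equiv P A B \<Longrightarrow> J_equiv P (fa_wrap x y A) (fa_wrap x y B)"
  unfolding J_equiv_def by (drule in_J_wrap[where x = x and y = y]) simp

lemma J_equiv_in_J: "J_equiv P A B \<Longrightarrow> in_J P B \<Longrightarrow> in_J P A"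
  unfolding J_equiv_def by (drule (1) in_J_append) (erule in_J_cong, simp)

lemma J_equiv_ev: "is_functional P T \<Longrightarrow> J_equiv P A B \<Longrightarrow> fa_ev T A = fa_ev T B"
  unfolding J_equiv_def by (drule (1) functional_vanishes_on_J) simp

lemma J_equiv_Cons: "J_equiv P [(c, v)] B \<Longrightarrow> J_equiv P A A' \<Longrightarrow> J_equiv P ((c, v) # A) (B @ A')"
  using J_equiv_append[of P "[(c, v)]" B A A'] by simp

lemma J_equiv_smult_word: "J_equiv P (fa_word v) B \<Longrightarrow> J_equiv P [(c, v)] (fa_smult c B)"
  by (rule J_equiv_trans[OF _ J_equiv_smult], rule J_equiv_coeff) (simp_all add: fa_word_def)

lemma J_equiv_from_rel:
  assumes "i < length (rels P)" "\<And>w. fa_coeff (fa_smult s (rels P ! i)) w = fa_coeff (A @ fa_smult (-1) B) w"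
  shows "J_equiv P A B"
  unfolding J_equiv_def using in_J_smult[OF in_J_rels[OF assms(1)]] assms(2) by (rule in_J_cong)

lemma J_equiv_UZ: "J_equiv P [(1, [U, Z])] [(1, [Z, U]), (-1, [U])]"
  by (rule J_equiv_from_rel[where i = 0 and s = "-1"]) (simp_all add: rels_def)

lemma J_equiv_VZ: "J_equiv P [(1, [V, Z])] [(1, [Z, V]), (1, [V])]"
  by (rule J_equiv_from_rel[where i = 1 and s = "-1"]) (simp_all add: rels_def)

lemma J_equiv_UV: "J_equiv P [(1, [U, V])] (fa_poly (pcompose P [:-1/2, 1:]))"
  by (rule J_equiv_from_rel[where i = 2 and s = 1]) (simp_all add: rels_def)

lemma J_equiv_VU: "J_equiv P [(1, [V, U])] (fa_poly (pcompose P [:1/2, 1:]))"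
  by (rule J_equiv_from_rel[where i = 3 and s = 1]) (simp_all add: rels_def)

section \<open>Normal forms of words modulo the relations\<close>

definition weight :: "word \<Rightarrow> int" where
  "weight w = int (count_list w U) - int (count_list w V)"

definition uv_count :: "word \<Rightarrow> nat" where
  "uv_count w = length (filter (\<lambda>g. g \<noteq> Z) w)"

definition normal_word :: "word \<Rightarrow> bool" where
  "normal_word w \<longleftrightarrow> (\<exists>i k. w = zs i @ replicate k U) \<or> (\<exists>i k. w = zs i @ replicate k V)"

definition normal_form :: "int \<Rightarrow> fa \<Rightarrow> bool" where
  "normal_form e B \<longleftrightarrow> (\<forall>q\<in>set B. normal_word (snd q) \<and> weight (snd q) = e)"

lemma count_list_replicate [simp]: "count_list (replicate n a) b = (if a = b then n else 0)"
  by (induct n) auto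

lemma weight_simps [simp]:
  "weight [] = 0"
  "weight (a # w) = weight w + (if a = U then 1 else if a = V then -1 else 0)"
  "weight (x @ y) = weight x + weight y"
  "weight (zs n) = 0" "weight (replicate n U) = int n" "weight (replicate n V) = - int n"
  by (auto simp: weight_def)

lemma uv_count_simps [simp]:
  "uv_count [] = 0" "uv_count (a # w) = (if a = Z then uv_count w else Suc (uv_count w))"
  "uv_count (x @ y) = uv_count x + uv_count y" "uv_count (zs n) = 0"
  by (auto simp: uv_count_def)

lemma J_equiv_smult_wordwise:
  assumes "\<forall>p\<in>set A. \<exists>B. J_equiv P (fa_word (snd p)) B \<and> (\<forall>q\<in>set B. G (snd q))"
  shows "\<exists>B. J_equiv P A B \<and> (\<forall>q\<in>set B. G (snd q))"
  using assms
proof (induct A)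
  case Nil
  then show ?case by (intro exI[of _ "[]"]) (simp add: J_equiv_refl)
next
  case (Cons a A)
  obtain c v where a: "a = (c, v)" by force
  obtain B1 where B1: "J_equiv P (fa_word v) B1" "\<forall>q\<in>set B1. G (snd q)"
    using Cons.prems a by auto
  obtain B2 where B2: "J_equiv P A B2" "\<forall>q\<in>set B2. G (snd q)"
    using Cons by auto
  have "J_equiv P (a # A) (fa_smult c B1 @ B2)"
    unfolding a by (rule J_equiv_Cons[OF J_equiv_smult_word[OF B1(1)] B2(1)])
  moreover have "\<forall>q\<in>set (fa_smult c B1 @ B2). G (snd q)"
    using B1(2) B2(2) by (auto simp: fa_smult_def)
  ultimately show ?case by blast
qed

lemma J_equiv_power_Z:
  assumes rel: "J_equiv P [(1, [c, Z])] [(1, [Z, c]), (-s, [c])]"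
  shows "J_equiv P (fa_word (replicate k c @ [Z]))
           [(1, Z # replicate k c), (- s * of_nat k, replicate k c)]"
proof (induct k)
  case 0
  then show ?case by (intro J_equiv_coeff) (simp add: fa_word_def)
next
  case (Suc k)
  have "J_equiv P (fa_wrap [c] [] (fa_word (replicate k c @ [Z])))
          (fa_wrap [c] [] [(1, Z # replicate k c), (- s * of_nat k, replicate k c)])"
    by (rule J_equiv_wrap[OF Suc])
  then have e1: "J_equiv P (fa_word (replicate (Suc k) c @ [Z]))
      ([(1, [c, Z] @ replicate k c)] @ [(- s * of_nat k, c # replicate k c)])"
    by simp
  have "J_equiv P (fa_wrap [] (replicate k c) [(1, [c, Z])])
          (fa_wrap [] (replicate k c) [(1, [Z, c]), (-s, [c])])"
    by (rule J_equiv_wrap[OF rel])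
  then have "J_equiv P [(1, [c, Z] @ replicate k c)] [(1, Z # c # replicate k c), (-s, c # replicate k c)]"
    by simp
  from J_equiv_append[OF this J_equiv_refl] e1
  have "J_equiv P (fa_word (replicate (Suc k) c @ [Z]))
     ([(1, Z # c # replicate k c), (-s, c # replicate k c)] @ [(- s * of_nat k, c # replicate k c)])"
    using J_equiv_trans by blast
  moreover have "J_equiv P
      ([(1, Z # c # replicate k c), (-s, c # replicate k c)] @ [(- s * of_nat k, c # replicate k c)])
      [(1, Z # replicate (Suc k) c), (- s * of_nat (Suc k), replicate (Suc k) c)]"
    by (rule J_equiv_coeff) (simp add: algebra_simps)
  ultimately show ?case by (rule J_equiv_trans)
qed

lemma J_equiv_normal_single_gen:
  assumes rel: "J_equiv P [(1, [c, Z])] [(1, [Z, c]), (-s, [c])]" and "c \<noteq> Z"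
  shows "set w \<subseteq> {Z, c} \<Longrightarrow>
    \<exists>B. J_equiv P (fa_word w) B \<and> (\<forall>q\<in>set B. \<exists>i. snd q = zs i @ replicate (count_list w c) c)"
proof (induct w rule: rev_induct)
  case Nil
  then show ?case by (intro exI[of _ "fa_word []"]) (auto simp: J_equiv_refl fa_word_def)
next
  case (snoc g w)
  then obtain B where B: "J_equiv P (fa_word w) B"
    "\<forall>q\<in>set B. \<exists>i. snd q = zs i @ replicate (count_list w c) c"
    by auto
  have W: "J_equiv P (fa_word (w @ [g])) (fa_wrap [] [g] B)"
    using J_equiv_wrap[OF B(1), of "[]" "[g]"] by simp
  show ?case
  proof (cases "g = Z")
    case True
    let ?k = "count_list w c"
    have "\<exists>B'. J_equiv P (fa_wrap [] [g] B) B' \<and> (\<forall>q\<in>set B'. \<exists>i. snd q = zs i @ replicate ?k c)"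
    proof (rule J_equiv_smult_wordwise, intro ballI)
      fix p assume "p \<in> set (fa_wrap [] [g] B)"
      then obtain i where i: "snd p = zs i @ replicate ?k c @ [Z]"
        using B(2) True by (auto simp: fa_wrap_def)
      have "J_equiv P (fa_wrap (zs i) [] (fa_word (replicate ?k c @ [Z])))
           (fa_wrap (zs i) [] [(1, Z # replicate ?k c), (- s * of_nat ?k, replicate ?k c)])"
        by (rule J_equiv_wrap[OF J_equiv_power_Z[OF rel]])
      then have "J_equiv P (fa_word (snd p))
          [(1, zs (Suc i) @ replicate ?k c), (- s * of_nat ?k, zs i @ replicate ?k c)]"
        by (simp add: i replicate_app_Cons_same)
      then show "\<exists>B. J_equiv P (fa_word (snd p)) B \<and> (\<forall>q\<in>set B. \<exists>i. snd q = zs i @ replicate ?k c)"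
        by (intro exI[of _ "[(1, zs (Suc i) @ replicate ?k c), (- s * of_nat ?k, zs i @ replicate ?k c)]"])
          (auto simp del: replicate_Suc intro: exI[of _ "Suc i"])
    qed
    moreover have "count_list (w @ [g]) c = ?k" using True \<open>c \<noteq> Z\<close> by simp
    ultimately show ?thesis using J_equiv_trans[OF W] by auto
  next
    case False
    then have "g = c" using snoc.prems by auto
    then have "\<forall>q\<in>set (fa_wrap [] [g] B). \<exists>i. snd q = zs i @ replicate (count_list (w @ [g]) c) c"
      using B(2) by (auto simp: fa_wrap_def replicate_append_same)
    then show ?thesis using W by blast
  qed
qed

lemma word_first_non_Z:
  assumes "a \<in> set w" "b \<notin> set w" "a \<noteq> Z" "b \<noteq> Z" "a \<noteq> b"
  shows "\<exists>m y. w = zs m @ a # y"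
  using assms
proof (induct w)
  case (Cons g w)
  show ?case
  proof (cases "g = a")
    case True
    then show ?thesis by (intro exI[of _ 0]) simp
  next
    case False
    then have "g = Z" using Cons.prems by (cases g; cases a; cases b) auto
    moreover obtain m y where "w = zs m @ a # y" using Cons False by auto
    ultimately show ?thesis by (intro exI[of _ "Suc m"] exI[of _ y]) simp
  qed
qed simp

lemma word_contains_UV_pair:
  "U \<in> set w \<Longrightarrow> V \<in> set w \<Longrightarrow> \<exists>x m y. w = x @ U # zs m @ V # y \<or> w = x @ V # zs m @ U # y"
proof (induct w)
  case (Cons a w)
  show ?case
  proof (cases "U \<in> set w \<and> V \<in> set w")
    case True
    then obtain x m y where "w = x @ U # zs m @ V # y \<or> w = x @ V # zs m @ U # y"
      using Cons by blast
    then show ?thesis by (intro exI[of _ "a # x"] exI[of _ m] exI[of _ y]) auto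
  next
    case False
    show ?thesis
    proof (cases a)
      case U
      then obtain m y where "w = zs m @ V # y"
        using Cons.prems False word_first_non_Z[of V w U] by auto
      then show ?thesis using U by (intro exI[of _ "[]"] exI[of _ m] exI[of _ y]) auto
    next
      case V
      then obtain m y where "w = zs m @ U # y"
        using Cons.prems False word_first_non_Z[of U w V] by auto
      then show ?thesis using V by (intro exI[of _ "[]"] exI[of _ m] exI[of _ y]) auto
    qed (use Cons False in auto)
  qed
qed simp

text \<open>Induction on the distance m between a and b: commuting a past the z's in between
  leaves words of the same shape with smaller m, and for \<open>m = 0\<close> the pair \<open>ab\<close> is
  replaced by a polynomial in z, lowering the number of u's and v's.\<close>

lemma normal_form_reduce_pair:
  assumes relZ: "J_equiv P [(1, [a, Z])] [(1, [Z, a]), (-s, [a])]"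
    and relab: "J_equiv P [(1, [a, b])] (fa_poly Q)"
    and ab: "a \<noteq> Z" "b \<noteq> Z" "weight [a, b] = 0"
    and IH: "\<And>w'. uv_count w' < n \<Longrightarrow> \<exists>B. J_equiv P (fa_word w') B \<and> normal_form (weight w') B"
  shows "uv_count (x @ a # zs m @ b # y) = n \<Longrightarrow>
    \<exists>B. J_equiv P (fa_word (x @ a # zs m @ b # y)) B \<and> normal_form (weight (x @ a # zs m @ b # y)) B"
proof (induct m arbitrary: x)
  case 0
  let ?w = "x @ a # zs 0 @ b # y"
  have "J_equiv P (fa_word ?w) (fa_wrap x y (fa_poly Q))"
    using J_equiv_wrap[OF relab, of x y] by (simp add: fa_word_def)
  moreover have "\<exists>B. J_equiv P (fa_wrap x y (fa_poly Q)) B \<and>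
      (\<forall>q\<in>set B. normal_word (snd q) \<and> weight (snd q) = weight ?w)"
  proof (rule J_equiv_smult_wordwise, intro ballI)
    fix p assume "p \<in> set (fa_wrap x y (fa_poly Q))"
    then obtain i where i: "snd p = x @ zs i @ y" by (auto simp: fa_wrap_def fa_poly_def)
    then have "uv_count (snd p) < n" "weight (snd p) = weight ?w"
      using 0 ab by simp_all
    then show "\<exists>B. J_equiv P (fa_word (snd p)) B \<and>
        (\<forall>q\<in>set B. normal_word (snd q) \<and> weight (snd q) = weight ?w)"
      using IH unfolding normal_form_def by metis
  qed
  ultimately show ?case using J_equiv_trans unfolding normal_form_def by blast
next
  case (Suc m)
  let ?w1 = "(x @ [Z]) @ a # zs m @ b # y" and ?w2 = "x @ a # zs m @ b # y"
  have "J_equiv P (fa_wrap x (zs m @ b # y) [(1, [a, Z])])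
          (fa_wrap x (zs m @ b # y) [(1, [Z, a]), (-s, [a])])"
    by (rule J_equiv_wrap[OF relZ])
  then have e: "J_equiv P (fa_word (x @ a # zs (Suc m) @ b # y)) [(1, ?w1), (-s, ?w2)]"
    by (simp add: fa_word_def)
  have "uv_count ?w1 = n" "uv_count ?w2 = n"
    using Suc.prems ab by simp_all
  obtain B1 where B1: "J_equiv P (fa_word ?w1) B1" "normal_form (weight ?w1) B1"
    using Suc.hyps[OF \<open>uv_count ?w1 = n\<close>] by blast
  obtain B2 where B2: "J_equiv P (fa_word ?w2) B2" "normal_form (weight ?w2) B2"
    using Suc.hyps[OF \<open>uv_count ?w2 = n\<close>] by blast
  have "J_equiv P [(1, ?w1), (-s, ?w2)] (fa_smult 1 B1 @ (fa_smult (-s) B2 @ []))"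
    by (intro J_equiv_Cons J_equiv_smult_word B1(1) B2(1) J_equiv_refl)
  moreover have "normal_form (weight (x @ a # zs (Suc m) @ b # y)) (fa_smult 1 B1 @ (fa_smult (-s) B2 @ []))"
    using B1(2) B2(2) by (auto simp: normal_form_def fa_smult_def)
  ultimately show ?case using e J_equiv_trans by blast
qed

lemma normal_form_exists: "\<exists>B. J_equiv P (fa_word w) B \<and> normal_form (weight w) B"
proof (induct "uv_count w" arbitrary: w rule: less_induct)
  case less
  consider (UV) "U \<in> set w" "V \<in> set w" | (U) "V \<notin> set w" | (V) "U \<notin> set w"
    by blast
  then show ?case
  proof cases
    case UV
    then obtain x m y where "w = x @ U # zs m @ V # y \<or> w = x @ V # zs m @ U # y"
      using word_contains_UV_pair by blast
    then show ?thesis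
    proof
      assume w: "w = x @ U # zs m @ V # y"
      show ?thesis unfolding w
        by (rule normal_form_reduce_pair[OF J_equiv_UZ J_equiv_UV _ _ _ less]) (simp_all add: w)
    next
      assume w: "w = x @ V # zs m @ U # y"
      have rel: "J_equiv P [(1, [V, Z])] [(1, [Z, V]), (- (- 1), [V])]"
        using J_equiv_VZ by simp
      show ?thesis unfolding w
        by (rule normal_form_reduce_pair[OF rel J_equiv_VU _ _ _ less]) (simp_all add: w)
    qed
  next
    case U
    have "set w \<subseteq> {Z, U}"
    proof
      fix g assume "g \<in> set w"
      with U show "g \<in> {Z, U}" by (cases g) auto
    qed
    then obtain B where B: "J_equiv P (fa_word w) B"
      "\<forall>q\<in>set B. \<exists>i. snd q = zs i @ replicate (count_list w U) U"
      using J_equiv_normal_single_gen[OF J_equiv_UZ] by blast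
    moreover have "count_list w V = 0" using U by (simp add: count_list_0_iff)
    ultimately show ?thesis by (fastforce simp: normal_form_def normal_word_def weight_def)
  next
    case V
    have "set w \<subseteq> {Z, V}"
    proof
      fix g assume "g \<in> set w"
      with V show "g \<in> {Z, V}" by (cases g) auto
    qed
    have rel: "J_equiv P [(1, [V, Z])] [(1, [Z, V]), (- (- 1), [V])]"
      using J_equiv_VZ by simp
    obtain B where B: "J_equiv P (fa_word w) B"
      "\<forall>q\<in>set B. \<exists>i. snd q = zs i @ replicate (count_list w V) V"
      using J_equiv_normal_single_gen[OF rel _ \<open>set w \<subseteq> {Z, V}\<close>] by blast
    moreover have "count_list w U = 0" using V by (simp add: count_list_0_iff)
    ultimately show ?thesis by (fastforce simp: normal_form_def normal_word_def weight_def)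
  qed
qed

section \<open>Twisted traces and the ideal \<open>I\<^sub>T\<close>\<close>

lemma fa_coeff_map_zs:
  "fa_coeff (map (\<lambda>i. (f i, zs i)) [0..<n]) w =
    (if w = zs (length w) \<and> length w < n then f (length w) else 0)"
proof (induct n)
  case (Suc n)
  then show ?case by (cases "w = zs n") (auto simp: fa_coeff_def less_Suc_eq)
qed simp

lemma fa_coeff_fa_poly:
  "fa_coeff (fa_poly Q) w = (if w = zs (length w) then coeff Q (length w) else 0)"
  unfolding fa_poly_def fa_coeff_map_zs by (auto simp: coeff_eq_0)

definition fa_to_poly :: "fa \<Rightarrow> complex poly" where
  "fa_to_poly B = (\<Sum>(c, v)\<leftarrow>B. monom c (length v))"

lemma fa_coeff_fa_to_poly:
  assumes "\<forall>q\<in>set B. snd q = zs (length (snd q))"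
  shows "fa_coeff (fa_poly (fa_to_poly B)) w = fa_coeff B w"
  using assms
proof (induct B)
  case (Cons a B)
  obtain c v where a: "a = (c, v)" by force
  have "v = zs (length v)" using Cons.prems a by auto
  then have "fa_coeff (fa_poly (monom c (length v))) w = (if v = w then c else 0)"
    by (auto simp: fa_coeff_fa_poly coeff_monom)
  moreover have "fa_coeff (fa_poly (fa_to_poly (a # B))) w
      = fa_coeff (fa_poly (monom c (length v))) w + fa_coeff (fa_poly (fa_to_poly B)) w"
    by (simp add: fa_coeff_fa_poly fa_to_poly_def a coeff_add)
  ultimately show ?case using Cons a by simp
qed (simp add: fa_coeff_fa_poly fa_to_poly_def)

lemma J_equiv_poly_if_weight_zero:
  assumes "weight w = 0"
  obtains Q where "J_equiv P (fa_word w) (fa_poly Q)"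
proof -
  obtain B where B: "J_equiv P (fa_word w) B" "normal_form (weight w) B"
    using normal_form_exists by blast
  have "\<forall>q\<in>set B. snd q = zs (length (snd q))"
    using B(2) assms by (auto simp: normal_form_def normal_word_def)
  then have "J_equiv P B (fa_poly (fa_to_poly B))"
    by (intro J_equiv_coeff fa_coeff_fa_to_poly[symmetric])
  then show ?thesis using that B(1) J_equiv_trans by blast
qed

definition poly_sandwich :: "(word \<Rightarrow> complex) \<Rightarrow> complex poly \<Rightarrow> word \<Rightarrow> word \<Rightarrow> complex" where
  "poly_sandwich T Q x y = fa_ev T (fa_wrap x y (fa_poly Q))"

definition moment :: "(word \<Rightarrow> complex) \<Rightarrow> complex poly \<Rightarrow> nat \<Rightarrow> complex" where
  "moment T S j = poly_sandwich T S [] (zs j)"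

lemma poly_sandwich_eq_sum:
  "poly_sandwich T Q x y = (\<Sum>i\<le>degree Q. coeff Q i * T (x @ zs i @ y))"
proof -
  have "fa_ev T (fa_wrap x y (map (\<lambda>i. (f i, zs i)) L)) = (\<Sum>i\<leftarrow>L. f i * T (x @ zs i @ y))" for f L
    by (induct L) auto
  then show ?thesis
    by (simp add: poly_sandwich_def fa_poly_def interv_sum_list_conv_sum_set_nat
        atLeast0LessThan lessThan_Suc_atMost del: upt_Suc)
qed

lemma twisted_trace_Z_commute:
  assumes "twisted_trace P t T"
  shows "T (w @ [Z]) = T (Z # w)"
proof -
  have "fa_ev T (fa_mult (fa_word w) (fa_word [Z]))
        = fa_ev T (fa_mult (fa_smult (g_factor t [Z]) (fa_word [Z])) (fa_word w))"
    using assms unfolding twisted_trace_def by blast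
  then show ?thesis by (simp add: fa_mult_def fa_word_def g_factor_def)
qed

text \<open>In the algebra \<open>z w - w z = weight(w) w\<close> for every word w.\<close>

lemma functional_Z_shift:
  assumes F: "is_functional P T"
  shows "T (x @ Z # w) = T (x @ w @ [Z]) + of_int (weight w) * T (x @ w)"
proof (induct w arbitrary: x)
  case (Cons a w)
  have IH: "T ((x @ [a]) @ Z # w) = T ((x @ [a]) @ w @ [Z]) + of_int (weight w) * T ((x @ [a]) @ w)"
    by (rule Cons)
  show ?case
  proof (cases a)
    case U
    have "fa_ev T (fa_wrap x w [(1, [U, Z])]) = fa_ev T (fa_wrap x w [(1, [Z, U]), (-1, [U])])"
      by (rule J_equiv_ev[OF F J_equiv_wrap[OF J_equiv_UZ]])
    then show ?thesis using IH U by (simp add: algebra_simps)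
  next
    case V
    have "fa_ev T (fa_wrap x w [(1, [V, Z])]) = fa_ev T (fa_wrap x w [(1, [Z, V]), (1, [V])])"
      by (rule J_equiv_ev[OF F J_equiv_wrap[OF J_equiv_VZ]])
    then show ?thesis using IH V by (simp add: algebra_simps)
  qed (use IH in simp)
qed simp

lemma twisted_trace_weight_nonzero:
  assumes tr: "twisted_trace P t T" and "weight w \<noteq> 0"
  shows "T w = 0"
proof -
  have "is_functional P T" using tr by (simp add: twisted_trace_def)
  from functional_Z_shift[OF this, of "[]" w] twisted_trace_Z_commute[OF tr, of w]
  have "of_int (weight w) * T w = 0" by simp
  then show ?thesis using assms(2) by simp
qed

lemma I_T_iff_moments:
  assumes tr: "twisted_trace P t T"
  shows "S \<in> I_T T \<longleftrightarrow> (\<forall>j. moment T S j = 0)"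
proof
  assume "S \<in> I_T T"
  then show "\<forall>j. moment T S j = 0"
    by (auto simp: I_T_def moment_def poly_sandwich_def fa_ev_mult fa_word_def
        dest: spec[of _ "fa_word (zs _)"])
next
  assume M: "\<forall>j. moment T S j = 0"
  have F: "is_functional P T" using tr by (simp add: twisted_trace_def)
  have "poly_sandwich T S [] w = 0" for w
  proof (cases "weight w = 0")
    case False
    then show ?thesis
      unfolding poly_sandwich_eq_sum using twisted_trace_weight_nonzero[OF tr] by simp
  next
    case True
    then obtain Q where Q: "J_equiv P (fa_word w) (fa_poly Q)"
      by (rule J_equiv_poly_if_weight_zero)
    have "T (zs i @ w) = poly_sandwich T Q (zs i) []" for i
      using J_equiv_ev[OF F J_equiv_wrap[OF Q, of "zs i" "[]"]] by (simp add: poly_sandwich_def)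
    then have "poly_sandwich T S [] w
        = (\<Sum>i\<le>degree S. coeff S i * (\<Sum>l\<le>degree Q. coeff Q l * T (zs i @ zs l)))"
      by (simp add: poly_sandwich_eq_sum)
    also have "\<dots> = (\<Sum>l\<le>degree Q. coeff Q l * moment T S l)"
      by (simp add: moment_def poly_sandwich_eq_sum sum_distrib_left algebra_simps sum.swap[of _ "{..degree S}"])
    also have "\<dots> = 0" using M by simp
    finally show ?thesis .
  qed
  then have "fa_ev T (fa_mult (fa_poly S) b) = 0" for b
    unfolding fa_ev_mult by (induct b) (auto simp: poly_sandwich_def)
  then show "S \<in> I_T T" by (simp add: I_T_def)
qed

section \<open>The Stieltjes transform\<close>

unbundle fps_syntax

lemma xpoly_eq_sum: "xpoly R = (\<Sum>i\<le>degree R. fls_const (coeff R i) * fls_X_inv ^ i)"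
proof -
  have "degree (map_poly fls_const R) = degree R" by (rule degree_map_poly) simp
  then show ?thesis unfolding xpoly_def poly_altdef by (simp add: coeff_map_poly)
qed

lemma xpoly_mult_nth: "(xpoly S * G) $$ k = (\<Sum>i\<le>degree S. coeff S i * G $$ (k + int i))"
proof -
  have "xpoly S * G = (\<Sum>i\<le>degree S. fls_const (coeff S i) * (fls_X_inv ^ i * G))"
    unfolding xpoly_eq_sum by (simp add: sum_distrib_right mult.assoc)
  then show ?thesis by (simp add: fls_nth_sum fls_X_inv_power_times_conv_shift)
qed

lemma xpoly_nth: "xpoly R $$ k = (if k \<le> 0 then coeff R (nat (- k)) else 0)"
proof -
  have "xpoly R $$ k = (\<Sum>i\<le>degree R. if i = nat (- k) \<and> k \<le> 0 then coeff R i else 0)"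
    unfolding xpoly_eq_sum by (auto simp: fls_nth_sum intro: sum.cong)
  then show ?thesis by (auto simp: sum.delta' coeff_eq_0 not_le)
qed

lemma xpoly_inject [simp]: "xpoly A = xpoly B \<longleftrightarrow> A = B"
proof
  assume "xpoly A = xpoly B"
  then have "xpoly A $$ (- int n) = xpoly B $$ (- int n)" for n by simp
  then show "A = B" by (intro poly_eqI) (simp add: xpoly_nth)
qed simp

lemma xpoly_0 [simp]: "xpoly 0 = 0"
  by (simp add: xpoly_def)

lemma xpoly_eq_0_iff [simp]: "xpoly A = 0 \<longleftrightarrow> A = 0"
  using xpoly_inject[of A 0] by simp

lemma xpoly_add: "xpoly (A + B) = xpoly A + xpoly B"
  by (simp add: fls_eq_iff xpoly_nth)

lemma xpoly_smult: "xpoly (smult a B) = fls_const a * xpoly B"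
  by (simp add: fls_eq_iff xpoly_nth)

lemma xpoly_mult: "xpoly (A * B) = xpoly A * xpoly B"
proof (induct A)
  case (pCons a A)
  have X: "fls_X_inv * f = fls_shift 1 f" for f :: "complex fls"
    using fls_X_inv_power_times_conv_shift(1)[of 1 f] by simp
  have pCons_eq: "xpoly (pCons b C) = fls_const b + fls_X_inv * xpoly C" for b C
  proof (subst fls_eq_iff, intro allI)
    fix k :: int
    show "xpoly (pCons b C) $$ k = (fls_const b + fls_X_inv * xpoly C) $$ k"
    proof (cases "k < 0")
      case True
      then have "nat (- k) = Suc (nat (- k - 1))" by simp
      then show ?thesis using True by (simp add: xpoly_nth X)
    qed (simp add: xpoly_nth X)
  qed
  have "xpoly (pCons a A * B) = xpoly (smult a B + pCons 0 (A * B))" by simp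
  also have "\<dots> = fls_const a * xpoly B + fls_X_inv * (xpoly A * xpoly B)"
    by (simp add: xpoly_add xpoly_smult pCons_eq pCons(2))
  also have "\<dots> = xpoly (pCons a A) * xpoly B"
    by (simp add: pCons_eq algebra_simps)
  finally show ?case .
qed simp

lemma fls_eq_xpoly:
  fixes G :: "complex fls"
  assumes "\<And>k. k > 0 \<Longrightarrow> G $$ k = 0" and "\<And>k. k < - int N \<Longrightarrow> G $$ k = 0"
  shows "G = xpoly (\<Sum>i\<le>N. monom (G $$ (- int i)) i)"
proof (subst fls_eq_iff, intro allI)
  fix k :: int
  show "G $$ k = xpoly (\<Sum>i\<le>N. monom (G $$ (- int i)) i) $$ k"
    using assms by (cases "k > 0"; cases "nat (- k) \<le> N")
      (auto simp: xpoly_nth coeff_sum coeff_monom sum.delta)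
qed

lemma stieltjes_nth: "stieltjes T $$ k = (if k \<ge> 1 then T (zs (nat (k - 1))) else 0)"
  by (simp add: stieltjes_def fls_X_times_conv_shift)

lemma moment_eq_nth: "moment T S j = (xpoly S * stieltjes T) $$ (int j + 1)"
proof -
  have "moment T S j = (\<Sum>i\<le>degree S. coeff S i * T (zs i @ zs j))"
    by (simp add: moment_def poly_sandwich_eq_sum)
  also have "\<dots> = (\<Sum>i\<le>degree S. coeff S i * stieltjes T $$ (int j + 1 + int i))"
    by (rule sum.cong) (auto simp: stieltjes_nth replicate_add[symmetric] nat_add_distrib add.commute)
  finally show ?thesis by (simp add: xpoly_mult_nth)
qed

lemma xpoly_mult_stieltjes_poly_iff:
  "(\<exists>R. xpoly S * stieltjes T = xpoly R) \<longleftrightarrow> (\<forall>j. moment T S j = 0)"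
proof
  assume "\<exists>R. xpoly S * stieltjes T = xpoly R"
  then show "\<forall>j. moment T S j = 0" by (auto simp: moment_eq_nth xpoly_nth)
next
  assume M: "\<forall>j. moment T S j = 0"
  let ?G = "xpoly S * stieltjes T"
  have "?G $$ k = 0" if "k > 0" for k
    using M moment_eq_nth[of T S "nat (k - 1)"] that by simp
  moreover have "?G $$ k = 0" if "k < - int (degree S)" for k
    using that by (auto simp: xpoly_mult_nth stieltjes_nth intro!: sum.neutral)
  ultimately show "\<exists>R. ?G = xpoly R" by (blast intro: fls_eq_xpoly)
qed

section \<open>A family of representations\<close>

text \<open>The algebra acts on functions \<open>\<int> \<rightarrow> \<complex>\<close>, read as coefficient vectors in a basis
  \<open>(e\<^sub>n)\<close>: \<open>u e\<^sub>n = e\<^sub>n\<^sub>+\<^sub>1\<close>, \<open>v e\<^sub>n = P(\<lambda> + n - 1/2) e\<^sub>n\<^sub>-\<^sub>1\<close>, \<open>z e\<^sub>n = (\<lambda> + n) e\<^sub>n\<close>.\<close>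

definition rep_gen :: "complex poly \<Rightarrow> complex \<Rightarrow> gen \<Rightarrow> (int \<Rightarrow> complex) \<Rightarrow> int \<Rightarrow> complex" where
  "rep_gen P l g f = (case g of
      U \<Rightarrow> (\<lambda>n. f (n - 1))
    | V \<Rightarrow> (\<lambda>n. poly P (l + of_int n + 1/2) * f (n + 1))
    | Z \<Rightarrow> (\<lambda>n. (l + of_int n) * f n))"

fun rep_word :: "complex poly \<Rightarrow> complex \<Rightarrow> word \<Rightarrow> (int \<Rightarrow> complex) \<Rightarrow> int \<Rightarrow> complex" where
  "rep_word P l [] f = f"
| "rep_word P l (g # w) f = rep_gen P l g (rep_word P l w f)"

definition basis_vec :: "int \<Rightarrow> int \<Rightarrow> complex" where
  "basis_vec m n = (if n = m then 1 else 0)"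

definition rep_coeff :: "complex poly \<Rightarrow> complex \<Rightarrow> word \<Rightarrow> complex" where
  "rep_coeff P l w = rep_word P l w (basis_vec 0) 0"

lemma rep_word_append: "rep_word P l (x @ y) f = rep_word P l x (rep_word P l y f)"
  by (induct x) auto

lemma rep_word_zero: "rep_word P l x (\<lambda>n. 0) = (\<lambda>n. 0)"
  by (induct x) (auto simp: rep_gen_def split: gen.splits)

lemma rep_word_add:
  "rep_word P l x (\<lambda>n. f n + h n) = (\<lambda>n. rep_word P l x f n + rep_word P l x h n)"
  by (induct x) (auto simp: rep_gen_def algebra_simps split: gen.splits)

lemma rep_word_scale: "rep_word P l x (\<lambda>n. c * f n) = (\<lambda>n. c * rep_word P l x f n)"
  by (induct x) (auto simp: rep_gen_def algebra_simps split: gen.splits)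

lemma rep_word_sum_list:
  "(\<Sum>(c, w)\<leftarrow>r. c * rep_word P l x (F w) n) = rep_word P l x (\<lambda>m. \<Sum>(c, w)\<leftarrow>r. c * F w m) n"
proof (induct r arbitrary: n)
  case Nil
  then show ?case using rep_word_zero[of P l x] by (simp add: fun_eq_iff)
next
  case (Cons a r)
  obtain c w where a: "a = (c, w)" by force
  show ?case unfolding a using Cons
    by (simp add: rep_word_add[of P l x "\<lambda>m. c * F w m" "\<lambda>m. \<Sum>(c, w)\<leftarrow>r. c * F w m"] rep_word_scale)
qed

lemma rep_word_zs: "rep_word P l (zs i) g m = (l + of_int m) ^ i * g m"
  by (induct i) (auto simp: rep_gen_def)

lemma rep_fa_poly: "(\<Sum>(c, w)\<leftarrow>fa_poly Q. c * rep_word P l w g m) = poly Q (l + of_int m) * g m"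
proof -
  have "(\<Sum>(c, w)\<leftarrow>fa_poly Q. c * rep_word P l w g m)
      = (\<Sum>i\<leftarrow>[0..<Suc (degree Q)]. coeff Q i * ((l + of_int m) ^ i * g m))"
    by (simp add: fa_poly_def o_def rep_word_zs del: upt_Suc)
  also have "\<dots> = (\<Sum>i\<le>degree Q. coeff Q i * (l + of_int m) ^ i) * g m"
    by (simp add: interv_sum_list_conv_sum_set_nat atLeast0LessThan lessThan_Suc_atMost
        sum_distrib_right mult.assoc del: upt_Suc)
  finally show ?thesis by (simp add: poly_altdef)
qed

lemma rep_rels: "r \<in> set (rels P) \<Longrightarrow> (\<lambda>m. \<Sum>(c, w)\<leftarrow>r. c * rep_word P l w g m) = (\<lambda>m. 0)"
proof -
  have "(\<Sum>(c, w)\<leftarrow>fa_smult d A. c * F w) = d * (\<Sum>(c, w)\<leftarrow>A. c * F w)" for d A and F :: "word \<Rightarrow> complex"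
    by (induct A) (auto simp: algebra_simps)
  then show "r \<in> set (rels P) \<Longrightarrow> ?thesis"
    by (auto simp: rels_def rep_gen_def rep_fa_poly poly_pcompose algebra_simps fun_eq_iff)
qed

lemma rep_coeff_functional: "is_functional P (rep_coeff P l)"
  unfolding is_functional_def
proof (intro allI ballI)
  fix x y r assume r: "r \<in> set (rels P)"
  have "fa_ev (rep_coeff P l) (fa_mult (fa_mult (fa_word x) r) (fa_word y))
      = fa_ev (\<lambda>w. rep_coeff P l (x @ w @ y)) r"
    by (simp add: fa_mult_words fa_ev_wrap)
  also have "\<dots> = (\<Sum>(c, w)\<leftarrow>r. c * rep_word P l x (rep_word P l w (rep_word P l y (basis_vec 0))) 0)"
    by (simp add: rep_coeff_def rep_word_append fa_ev_def)
  also have "\<dots> = 0"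
    unfolding rep_word_sum_list rep_rels[OF r] rep_word_zero by simp
  finally show "fa_ev (rep_coeff P l) (fa_mult (fa_mult (fa_word x) r) (fa_word y)) = 0" .
qed

lemma rep_coeff_fa_poly: "fa_ev (rep_coeff P l) (fa_poly S) = poly S l"
  using poly_sandwich_eq_sum[of "rep_coeff P l" S "[]" "[]"]
  by (simp add: poly_sandwich_def rep_coeff_def rep_word_zs basis_vec_def poly_altdef)

lemma fa_poly_notin_J: "S \<noteq> 0 \<Longrightarrow> \<not> in_J P (fa_poly S)"
  using functional_vanishes_on_J[OF rep_coeff_functional] poly_all_0_iff_0
  by (metis rep_coeff_fa_poly)

lemma rep_word_replicate_U: "rep_word P l (replicate k U) (basis_vec b) = basis_vec (b + int k)"
  by (induct k) (auto simp: rep_gen_def basis_vec_def fun_eq_iff)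

lemma rep_word_replicate_V:
  "rep_word P l (replicate k V) (basis_vec a)
   = (\<lambda>n. (\<Prod>m<k. poly P (l + of_int a - of_nat m - 1/2)) * basis_vec (a - int k) n)"
  by (induct k) (auto simp: rep_gen_def basis_vec_def fun_eq_iff algebra_simps)

lemma prod_poly_shifts_nonzero:
  fixes P :: "complex poly" and a :: "nat \<Rightarrow> complex"
  assumes "P \<noteq> 0"
  obtains l where "(\<Prod>m<k. poly P (l + a m)) \<noteq> 0"
proof -
  have "(\<Prod>m<k. pcompose P [:a m, 1:]) \<noteq> 0"
    using assms by (auto simp: prod_zero_iff dest: pcompose_eq_0)
  then obtain l where "poly (\<Prod>m<k. pcompose P [:a m, 1:]) l \<noteq> 0"
    using poly_all_0_iff_0 by blast
  then show ?thesis using that by (auto simp: poly_prod poly_pcompose algebra_simps)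
qed

lemma rep_coeff_UV_nonzero:
  assumes "P \<noteq> 0"
  obtains l where "rep_coeff P l (replicate k U @ replicate k V) \<noteq> 0"
proof -
  have "rep_coeff P l (replicate k U @ replicate k V) = (\<Prod>m<k. poly P (l + (- of_nat m - 1/2)))" for l
    unfolding rep_coeff_def rep_word_append rep_word_replicate_V rep_word_scale rep_word_replicate_U
    by (simp add: basis_vec_def algebra_simps)
  then show ?thesis using prod_poly_shifts_nonzero[OF assms] that by metis
qed

lemma rep_coeff_VU_nonzero:
  assumes "P \<noteq> 0"
  obtains l where "rep_coeff P l (replicate k V @ replicate k U) \<noteq> 0"
proof -
  have "rep_coeff P l (replicate k V @ replicate k U) = (\<Prod>m<k. poly P (l + (of_nat k - of_nat m - 1/2)))" for l
    by (simp add: rep_coeff_def rep_word_append rep_word_replicate_U rep_word_replicate_V basis_vec_def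
        algebra_simps)
  then show ?thesis using prod_poly_shifts_nonzero[OF assms] that by metis
qed

section \<open>Degenerate traces\<close>

lemma poly_sandwich_add: "poly_sandwich T (A + B) x y = poly_sandwich T A x y + poly_sandwich T B x y"
proof -
  have "poly_sandwich T (A + B) x y = fa_ev T (fa_wrap x y (fa_poly A @ fa_poly B))"
    unfolding poly_sandwich_def
    by (intro fa_ev_cong fa_coeff_wrap_cong) (simp add: fa_coeff_fa_poly coeff_add)
  then show ?thesis by (simp add: poly_sandwich_def)
qed

lemma poly_sandwich_smult: "poly_sandwich T (smult c A) x y = c * poly_sandwich T A x y"
proof -
  have "poly_sandwich T (smult c A) x y = fa_ev T (fa_wrap x y (fa_smult c (fa_poly A)))"
    unfolding poly_sandwich_def
    by (intro fa_ev_cong fa_coeff_wrap_cong) (simp add: fa_coeff_fa_poly)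
  then show ?thesis by (simp add: poly_sandwich_def)
qed

lemma poly_sandwich_sum: "poly_sandwich T (\<Sum>i\<in>I. f i) x y = (\<Sum>i\<in>I. poly_sandwich T (f i) x y)"
proof (induct I rule: infinite_finite_induct)
  case (infinite I)
  then show ?case by (simp add: poly_sandwich_eq_sum)
next
  case empty
  then show ?case by (simp add: poly_sandwich_eq_sum)
qed (simp add: poly_sandwich_add)

lemma poly_sandwich_monom: "poly_sandwich T (monom c i) x y = c * T (x @ zs i @ y)"
  by (cases "c = 0") (simp_all add: poly_sandwich_eq_sum degree_monom_eq coeff_monom if_distrib[of "\<lambda>a. a * _"] cong: if_cong)

lemma fa_coeff_fa_poly_monom_mult:
  "fa_coeff (fa_poly (monom 1 i * A)) w = fa_coeff (fa_wrap (zs i) [] (fa_poly A)) w"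
proof (cases "\<exists>v. w = zs i @ v")
  case True
  then obtain v where v: "w = zs i @ v" by blast
  have "w = zs (length w) \<longleftrightarrow> v = zs (length v)"
    by (metis v append_eq_append_conv length_append length_replicate replicate_add)
  then show ?thesis using v by (auto simp: fa_coeff_wrap fa_coeff_fa_poly coeff_monom_mult)
next
  case False
  then have "\<not> (w = zs (length w) \<and> i \<le> length w)"
    by (metis le_add_diff_inverse replicate_add)
  then show ?thesis using False by (auto simp: fa_coeff_wrap fa_coeff_fa_poly coeff_monom_mult)
qed

lemma poly_sandwich_monom_mult: "poly_sandwich T (monom 1 i * A) x y = poly_sandwich T A (x @ zs i) y"
proof -
  have "poly_sandwich T (monom 1 i * A) x y = fa_ev T (fa_wrap x y (fa_wrap (zs i) [] (fa_poly A)))"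
    unfolding poly_sandwich_def by (intro fa_ev_cong fa_coeff_wrap_cong fa_coeff_fa_poly_monom_mult)
  then show ?thesis by (simp add: poly_sandwich_def)
qed

lemma poly_sandwich_mult_J_equiv:
  assumes F: "is_functional P T" and u: "J_equiv P (fa_word u) (fa_poly \<Phi>)"
  shows "poly_sandwich T (Q * \<Phi>) x y = poly_sandwich T Q x (u @ y)"
proof -
  have "Q * \<Phi> = (\<Sum>i\<le>degree Q. smult (coeff Q i) (monom 1 i * \<Phi>))"
    by (subst (1) poly_as_sum_of_monoms[symmetric, of Q])
      (simp add: sum_distrib_right smult_monom mult_smult_left[symmetric] del: mult_smult_left)
  then have "poly_sandwich T (Q * \<Phi>) x y = (\<Sum>i\<le>degree Q. coeff Q i * poly_sandwich T \<Phi> (x @ zs i) y)"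
    by (simp only: poly_sandwich_sum poly_sandwich_smult poly_sandwich_monom_mult)
  also have "\<dots> = poly_sandwich T Q x (u @ y)"
  proof -
    have "T (x @ zs i @ u @ y) = poly_sandwich T \<Phi> (x @ zs i) y" for i
      using J_equiv_ev[OF F J_equiv_wrap[OF u, of "x @ zs i" y]] by (simp add: poly_sandwich_def)
    then show ?thesis unfolding poly_sandwich_eq_sum[of T Q] by simp
  qed
  finally show ?thesis .
qed

definition weight_poly :: "fa \<Rightarrow> word \<Rightarrow> complex poly" where
  "weight_poly B v = (\<Sum>i\<in>{i. zs i @ v \<in> snd ` set B}. monom (fa_coeff B (zs i @ v)) i)"

lemma inj_zs_append: "inj (\<lambda>i. zs i @ v)"
  by (rule injI) (metis append_same_eq length_replicate)

lemma finite_zs_append: "finite {i. zs i @ v \<in> snd ` set B}"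
  using finite_vimageI[OF _ inj_zs_append] by (simp add: vimage_def)

lemma coeff_weight_poly: "coeff (weight_poly B v) i = fa_coeff B (zs i @ v)"
  by (auto simp: weight_poly_def coeff_sum coeff_monom finite_zs_append fa_coeff_notin)

lemma normal_word_weight:
  assumes "normal_word w" "weight w = weight (replicate k c)" "c \<noteq> Z"
  shows "\<exists>i. w = zs i @ replicate k c"
  using assms by (cases c) (auto simp: normal_word_def)

lemma fa_ev_wrap_normal_form:
  assumes T0: "\<And>w. weight w \<noteq> 0 \<Longrightarrow> T w = 0" and B: "\<forall>q\<in>set B. normal_word (snd q)"
    and "c \<noteq> Z" and y: "weight (replicate k c @ y) = 0"
  shows "fa_ev T (fa_wrap [] y B) = poly_sandwich T (weight_poly B (replicate k c)) [] (replicate k c @ y)"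
proof -
  let ?v = "replicate k c" and ?W = "snd ` set B"
  let ?I = "{i. zs i @ ?v \<in> ?W}"
  have "fa_ev T (fa_wrap [] y B) = (\<Sum>w\<in>?W. fa_coeff B w * T (w @ y))"
    by (simp add: fa_ev_wrap fa_ev_eq_sum_coeff)
  also have "\<dots> = (\<Sum>w\<in>(\<lambda>i. zs i @ ?v) ` ?I. fa_coeff B w * T (w @ y))"
  proof (rule sum.mono_neutral_right)
    show "\<forall>w\<in>?W - (\<lambda>i. zs i @ ?v) ` ?I. fa_coeff B w * T (w @ y) = 0"
    proof
      fix w assume w: "w \<in> ?W - (\<lambda>i. zs i @ ?v) ` ?I"
      then have "normal_word w" using B by auto
      have "weight w \<noteq> weight ?v"
      proof
        assume "weight w = weight ?v"
        then obtain i where "w = zs i @ ?v"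
          using normal_word_weight[OF \<open>normal_word w\<close> _ \<open>c \<noteq> Z\<close>] by blast
        with w show False by auto
      qed
      then have "weight (w @ y) \<noteq> 0" using y by simp
      then show "fa_coeff B w * T (w @ y) = 0" using T0 by simp
    qed
  qed auto
  also have "\<dots> = (\<Sum>i\<in>?I. fa_coeff B (zs i @ ?v) * T (zs i @ ?v @ y))"
    by (subst sum.reindex) (auto intro: inj_on_subset[OF inj_zs_append])
  also have "\<dots> = poly_sandwich T (weight_poly B ?v) [] (?v @ y)"
    by (simp add: weight_poly_def poly_sandwich_sum poly_sandwich_monom)
  finally show ?thesis .
qed

text \<open>Pairing the weight-k part \<open>q(z) c\<^sup>k\<close> of an annihilated element with \<open>d\<^sup>k\<close> produces
  \<open>q \<Phi>\<close> in \<open>I\<^sub>T\<close>, where \<open>c\<^sup>k d\<^sup>k \<equiv> \<Phi>(z)\<close>.\<close>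

lemma weight_poly_annihilator_eq_0:
  assumes tr: "twisted_trace P t T" and I_T: "I_T T \<subseteq> {0}"
    and aB: "J_equiv P a B" and B: "\<forall>q\<in>set B. normal_word (snd q)"
    and ann: "\<forall>b. fa_ev T (fa_mult a b) = 0"
    and "c \<noteq> Z" and cd: "weight (replicate k c @ replicate k d) = 0"
    and nz: "rep_coeff P l (replicate k c @ replicate k d) \<noteq> 0"
  shows "weight_poly B (replicate k c) = 0"
proof -
  have F: "is_functional P T" using tr by (simp add: twisted_trace_def)
  obtain \<Phi> where \<Phi>: "J_equiv P (fa_word (replicate k c @ replicate k d)) (fa_poly \<Phi>)"
    using J_equiv_poly_if_weight_zero[OF cd] by blast
  have "\<Phi> \<noteq> 0"
    using J_equiv_ev[OF rep_coeff_functional \<Phi>] nz by (auto simp: rep_coeff_fa_poly)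
  let ?q = "weight_poly B (replicate k c)"
  have "moment T (?q * \<Phi>) j = 0" for j
  proof -
    let ?y = "replicate k d @ zs j"
    have "moment T (?q * \<Phi>) j = poly_sandwich T ?q [] (replicate k c @ ?y)"
      by (simp add: moment_def poly_sandwich_mult_J_equiv[OF F \<Phi>])
    also have "\<dots> = fa_ev T (fa_wrap [] ?y B)"
      using cd by (intro fa_ev_wrap_normal_form[symmetric] twisted_trace_weight_nonzero[OF tr] B
          \<open>c \<noteq> Z\<close>) simp_all
    also have "\<dots> = fa_ev T (fa_mult a (fa_word ?y))"
      by (simp add: fa_mult_word_right J_equiv_ev[OF F J_equiv_wrap[OF aB]])
    finally show ?thesis using ann by simp
  qed
  then have "?q * \<Phi> = 0" using I_T I_T_iff_moments[OF tr] by blast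
  with \<open>\<Phi> \<noteq> 0\<close> show ?thesis by simp
qed

lemma I_T_nonzero_if_degenerate:
  assumes tr: "twisted_trace P t T" and "P \<noteq> 0" and "degenerate P T"
  shows "\<exists>S. S \<noteq> 0 \<and> S \<in> I_T T"
proof (rule ccontr)
  assume "\<not> (\<exists>S. S \<noteq> 0 \<and> S \<in> I_T T)"
  then have I_T: "I_T T \<subseteq> {0}" by blast
  obtain a where a: "\<not> in_J P a" and ann: "\<forall>b. fa_ev T (fa_mult a b) = 0"
    using \<open>degenerate P T\<close> unfolding degenerate_def by blast
  have "\<exists>B. J_equiv P a B \<and> (\<forall>q\<in>set B. normal_word (snd q))"
  proof (rule J_equiv_smult_wordwise, intro ballI)
    fix p
    show "\<exists>B. J_equiv P (fa_word (snd p)) B \<and> (\<forall>q\<in>set B. normal_word (snd q))"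
      using normal_form_exists[of P "snd p"] by (auto simp: normal_form_def)
  qed
  then obtain B where aB: "J_equiv P a B" and B: "\<forall>q\<in>set B. normal_word (snd q)" by blast
  have "fa_coeff B w = 0" for w
  proof (cases "w \<in> snd ` set B")
    case True
    then have "normal_word w" using B by auto
    then show ?thesis unfolding normal_word_def
    proof (elim disjE exE)
      fix i k assume w: "w = zs i @ replicate k U"
      obtain l where "rep_coeff P l (replicate k U @ replicate k V) \<noteq> 0"
        using rep_coeff_UV_nonzero[OF \<open>P \<noteq> 0\<close>] .
      then have "weight_poly B (replicate k U) = 0"
        using weight_poly_annihilator_eq_0[OF tr I_T aB B ann, where c = U and d = V] by simp
      then show ?thesis using coeff_weight_poly[of B "replicate k U" i] w by simp
    next
      fix i k assume w: "w = zs i @ replicate k V"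
      obtain l where "rep_coeff P l (replicate k V @ replicate k U) \<noteq> 0"
        using rep_coeff_VU_nonzero[OF \<open>P \<noteq> 0\<close>] .
      then have "weight_poly B (replicate k V) = 0"
        using weight_poly_annihilator_eq_0[OF tr I_T aB B ann, where c = V and d = U] by simp
      then show ?thesis using coeff_weight_poly[of B "replicate k V" i] w by simp
    qed
  qed (rule fa_coeff_notin)
  then have "in_J P B" by (intro in_J_cong[OF in_J_Nil]) simp
  then have "in_J P a" by (rule J_equiv_in_J[OF aB])
  with a show False by blast
qed

lemma I_T_eq_stieltjes_multipliers:
  assumes "twisted_trace P t T"
  shows "I_T T = {S. \<exists>R. xpoly S * stieltjes T = xpoly R}"
  using I_T_iff_moments[OF assms] xpoly_mult_stieltjes_poly_iff by blast

lemma degenerate_if_I_T_nonzero: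
  assumes "S \<noteq> 0" "S \<in> I_T T"
  shows "degenerate P T"
  using assms fa_poly_notin_J unfolding degenerate_def I_T_def by blast

lemma xpoly_multipliers_of_fraction:
  assumes "coprime R S" "S \<noteq> 0"
  shows "{Q. \<exists>R'. xpoly Q * (xpoly R / xpoly S) = xpoly R'} = {Q. S dvd Q}"
proof (intro equalityI subsetI; clarify)
  have S: "xpoly S \<noteq> 0" using assms(2) by simp
  fix Q
  {
    fix R' assume "xpoly Q * (xpoly R / xpoly S) = xpoly R'"
    then have "xpoly (Q * R) = xpoly (R' * S)" using S by (simp add: xpoly_mult field_simps)
    then have "S dvd Q * R" by (simp add: dvd_triv_right)
    with assms(1) show "S dvd Q" by (metis coprime_commute coprime_dvd_mult_left_iff)
  }
  {
    assume "S dvd Q"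
    then obtain K where "Q = S * K" by (elim dvdE)
    then have "xpoly Q * (xpoly R / xpoly S) = xpoly (K * R)" using S by (simp add: xpoly_mult)
    then show "\<exists>R'. xpoly Q * (xpoly R / xpoly S) = xpoly R'" by blast
  }
qed

theorem theorem3p2:
  fixes P :: "complex poly" and t :: complex and T :: "word \<Rightarrow> complex"
  assumes "degree P \<ge> 1" and "lead_coeff P = 1" and "t \<noteq> 0"
    and "twisted_trace P t T"
  shows "I_T T = {S. \<exists>R. xpoly S * stieltjes T = xpoly R} \<and>
    (degenerate P T \<longleftrightarrow> (\<exists>R S. S \<noteq> 0 \<and> stieltjes T = xpoly R / xpoly S)) \<and>
    (\<forall>R S. lead_coeff S = 1 \<and> coprime R S \<and> stieltjes T = xpoly R / xpoly S
            \<longrightarrow> I_T T = {Q. S dvd Q})"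
proof (intro conjI allI impI)
  note I_T = I_T_eq_stieltjes_multipliers[OF assms(4)]
  have fraction_iff: "stieltjes T = xpoly R / xpoly S \<longleftrightarrow> xpoly S * stieltjes T = xpoly R"
    if "S \<noteq> 0" for R S
    using that by (auto simp: field_simps)
  show "I_T T = {S. \<exists>R. xpoly S * stieltjes T = xpoly R}" by (fact I_T)
  have "P \<noteq> 0" using assms(1) by auto
  show "degenerate P T \<longleftrightarrow> (\<exists>R S. S \<noteq> 0 \<and> stieltjes T = xpoly R / xpoly S)"
  proof
    assume "degenerate P T"
    then obtain S R where "S \<noteq> 0" "xpoly S * stieltjes T = xpoly R"
      using I_T_nonzero_if_degenerate[OF assms(4) \<open>P \<noteq> 0\<close>] unfolding I_T by blast
    then show "\<exists>R S. S \<noteq> 0 \<and> stieltjes T = xpoly R / xpoly S" using fraction_iff by blast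
  next
    assume "\<exists>R S. S \<noteq> 0 \<and> stieltjes T = xpoly R / xpoly S"
    then obtain R S where "S \<noteq> 0" "xpoly S * stieltjes T = xpoly R" using fraction_iff by blast
    then show "degenerate P T" using degenerate_if_I_T_nonzero[of S T P] unfolding I_T by blast
  qed
  fix R S assume RS: "lead_coeff S = 1 \<and> coprime R S \<and> stieltjes T = xpoly R / xpoly S"
  then have "S \<noteq> 0" by auto
  with RS show "I_T T = {Q. S dvd Q}"
    using xpoly_multipliers_of_fraction[of R S] unfolding I_T by simp
qed
end
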